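(* Let $b_1,\dots,b_N\in(0,1)$ and $c_1,c_2>0$ with $b_ib_j<1$, $b_ic_1<1$, $b_ic_2<1$ for all $i,j$. Then $\mathbb E^{\boldsymbol b,\boldsymbol b}_{\mathrm{GRW}}\big[V(\mathbf L)\big]<\infty$, where $V(\mathbf L)=(c_1c_2)^{\max_{1\le j\le N}(L_2(j)-L_1(j-1))}c_2^{L_1(N)-L_2(N)}$.
   Context: Under $\mathbb P^{\boldsymbol b,\boldsymbol b}_{\mathrm{GRW}}$, $\mathbf L_1=(L_1(j))_{0\le j\le N}$ and $\mathbf L_2=(L_2(j))_{0\le j\le N}$ are independent random walks with $L_1(0)=L_2(0)=0$ and independent increments $L_i(j)-L_i(j-1)\sim\mathrm{Geom}(b_j)$, where $\mathbb P(\mathrm{Geom}(q)=n)=(1-q)q^n$, $n\in\mathbb Z_{\ge0}$; $\mathbf L=(\mathbf L_1,\mathbf L_2)$. *)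

theory Defs
  imports "HOL-Probability.Probability"
begin

text \<open>Geom(q): P(n) = (1-q) q^n, i.e. the library's geometric_pmf with success probability 1 - q.\<close>
definition Geom :: "real \<Rightarrow> nat pmf" where
  "Geom q = geometric_pmf (1 - q)"

definition GRW_incr :: "nat \<Rightarrow> (nat \<Rightarrow> real) \<Rightarrow> (nat \<Rightarrow> nat) pmf" where
  "GRW_incr N b = Pi_pmf {1..N} 0 (\<lambda>j. Geom (b j))"

definition GRW :: "nat \<Rightarrow> (nat \<Rightarrow> real) \<Rightarrow> ((nat \<Rightarrow> nat) \<times> (nat \<Rightarrow> nat)) pmf" where
  "GRW N b = pair_pmf (GRW_incr N b) (GRW_incr N b)"

definition walk :: "(nat \<Rightarrow> nat) \<Rightarrow> nat \<Rightarrow> int" where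
  "walk X j = int (\<Sum>i=1..j. X i)"

definition Vfun :: "nat \<Rightarrow> real \<Rightarrow> real \<Rightarrow> (nat \<Rightarrow> int) \<Rightarrow> (nat \<Rightarrow> int) \<Rightarrow> real" where
  "Vfun N c1 c2 L1 L2 =
     (c1 * c2) powi (MAX j\<in>{1..N}. L2 j - L1 (j - 1)) * c2 powi (L1 N - L2 N)"

end

theory Submission
  imports Defs
begin

text \<open>
  Both exponents in V are controlled by the endpoints of the walks: since the walks are
  nondecreasing and start at 0, the maximum lies between 0 and L2(N), so
  V \<le> max(1,c1)^L2(N) * max(1,c2)^L1(N).
  By independence the expectation of this bound factorises into one geometric moment
  E[M^Geom(b i)] = (1 - b i)/(1 - b i * M) per increment, finite because b i * M < 1.
\<close>

lemma nn_integral_Geom_power: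
  fixes b M :: real
  assumes "0 < b" "b < 1" "0 \<le> M" "b * M < 1"
  shows "(\<integral>\<^sup>+ n. ennreal (M ^ n) \<partial>measure_pmf (Geom b)) = ennreal ((1 - b) / (1 - b * M))"
proof -
  have "(\<integral>\<^sup>+ n. ennreal (M ^ n) \<partial>measure_pmf (Geom b))
      = (\<integral>\<^sup>+ n. ennreal ((1 - b) * (b * M) ^ n) \<partial>count_space UNIV)"
    unfolding nn_integral_measure_pmf Geom_def using assms
    by (intro nn_integral_cong) (simp add: ennreal_mult'[symmetric] power_mult_distrib mult_ac)
  also have "\<dots> = (\<Sum>n. ennreal ((1 - b) * (b * M) ^ n))"
    by (rule nn_integral_count_space_nat)
  also have "\<dots> = ennreal ((1 - b) * (1 / (1 - b * M)))"
    using assms by (intro suminf_ennreal_eq sums_mult geometric_sums) auto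
  finally show ?thesis by simp
qed

lemma nn_integral_GRW_incr_power_sum:
  fixes M :: real
  assumes "0 \<le> M" and "\<forall>i\<in>{1..N}. 0 < b i \<and> b i < 1 \<and> b i * M < 1"
  shows "(\<integral>\<^sup>+ X. ennreal (M ^ (\<Sum>i=1..N. X i)) \<partial>measure_pmf (GRW_incr N b))
       = ennreal (\<Prod>i=1..N. (1 - b i) / (1 - b i * M))"
proof -
  have "(\<integral>\<^sup>+ X. ennreal (M ^ (\<Sum>i=1..N. X i)) \<partial>measure_pmf (GRW_incr N b))
      = (\<integral>\<^sup>+ X. (\<Prod>i=1..N. ennreal (M ^ X i)) \<partial>measure_pmf (GRW_incr N b))"
    using assms(1) by (simp add: power_sum prod_ennreal)
  also have "\<dots> = (\<Prod>i=1..N. \<integral>\<^sup>+ n. ennreal (M ^ n) \<partial>measure_pmf (Geom (b i)))"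
    unfolding GRW_incr_def by (rule nn_integral_prod_Pi_pmf) simp
  also have "\<dots> = (\<Prod>i=1..N. ennreal ((1 - b i) / (1 - b i * M)))"
    using assms by (intro prod.cong refl nn_integral_Geom_power) simp_all
  also have "\<dots> = ennreal (\<Prod>i=1..N. (1 - b i) / (1 - b i * M))"
    using assms(2) by (intro prod_ennreal) (force intro!: divide_nonneg_pos)
  finally show ?thesis .
qed

lemma power_int_le_max_one_power:
  fixes c :: real and e n :: int
  assumes "c > 0" "0 \<le> e" "e \<le> n"
  shows "c powi e \<le> max 1 c ^ nat n"
proof -
  have "c powi e = c ^ nat e"
    using assms by (metis nat_0_le power_int_of_nat)
  also have "\<dots> \<le> max 1 c ^ nat e"
    using assms by (intro power_mono) auto
  also have "\<dots> \<le> max 1 c ^ nat n"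
    using assms by (intro power_increasing) auto
  finally show ?thesis .
qed

lemma Vfun_le_endpoint_powers:
  fixes L1 L2 :: "nat \<Rightarrow> int" and c1 c2 :: real
  assumes "N \<ge> 1" "c1 > 0" "c2 > 0"
    and "mono L1" "mono L2" "L1 0 = 0" "L2 0 = 0"
  shows "Vfun N c1 c2 L1 L2 \<le> max 1 c1 ^ nat (L2 N) * max 1 c2 ^ nat (L1 N)"
proof -
  define m where "m = (MAX j\<in>{1..N}. L2 j - L1 (j - 1))"
  have L1_nonneg: "L1 j \<ge> 0" for j
    using \<open>mono L1\<close> \<open>L1 0 = 0\<close> by (metis le0 monoD)
  have m_ge: "m \<ge> L2 j - L1 (j - 1)" if "j \<in> {1..N}" for j
    unfolding m_def using that by (intro Max_ge) auto
  have "m \<in> (\<lambda>j. L2 j - L1 (j - 1)) ` {1..N}"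
    unfolding m_def using assms(1) by (intro Max_in) auto
  then obtain j where "j \<le> N" "m = L2 j - L1 (j - 1)"
    by auto
  then have m_le: "m \<le> L2 N"
    using \<open>mono L2\<close> L1_nonneg[of "j - 1"] by (auto dest: monoD)
  have m_nonneg: "0 \<le> m"
    using m_ge[of 1] assms(1) \<open>mono L2\<close> \<open>L1 0 = 0\<close> \<open>L2 0 = 0\<close> by (auto dest: monoD[of L2 0 1])
  have "L1 (N - 1) \<le> L1 N"
    using \<open>mono L1\<close> by (simp add: monoD)
  then have c2_exponent_nonneg: "0 \<le> m + (L1 N - L2 N)"
    using m_ge[of N] assms(1) by auto
  have "Vfun N c1 c2 L1 L2 = c1 powi m * c2 powi (m + (L1 N - L2 N))"
    unfolding Vfun_def m_def[symmetric] using assms(2,3)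
    by (simp add: power_int_mult_distrib power_int_add)
  also have "\<dots> \<le> max 1 c1 ^ nat (L2 N) * max 1 c2 ^ nat (L1 N)"
    using assms(2,3) m_nonneg m_le c2_exponent_nonneg
    by (intro mult_mono power_int_le_max_one_power) auto
  finally show ?thesis .
qed

lemma mono_walk: "mono (walk X)"
  unfolding walk_def by (intro monoI) (auto intro!: sum_mono2)

lemma walk_0 [simp]: "walk X 0 = 0"
  unfolding walk_def by simp

lemma nat_walk: "nat (walk X j) = (\<Sum>i=1..j. X i)"
  unfolding walk_def by (simp only: nat_int)

theorem proposition2p18:
  fixes N :: nat and b :: "nat \<Rightarrow> real" and c1 c2 :: real
  assumes "N \<ge> 1"
    and "\<forall>j\<in>{1..N}. 0 < b j \<and> b j < 1"
    and "c1 > 0" and "c2 > 0"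
    and "\<forall>i\<in>{1..N}. \<forall>j\<in>{1..N}. b i * b j < 1"
    and "\<forall>i\<in>{1..N}. b i * c1 < 1"
    and "\<forall>i\<in>{1..N}. b i * c2 < 1"
  shows "(\<integral>\<^sup>+ XY. ennreal (Vfun N c1 c2 (walk (fst XY)) (walk (snd XY))) \<partial>measure_pmf (GRW N b)) < \<infinity>"
proof -
  define E where "E M = (\<integral>\<^sup>+ X. ennreal (M ^ (\<Sum>i=1..N. X i)) \<partial>measure_pmf (GRW_incr N b))"
    for M :: real
  have E_finite: "E (max 1 c) < \<infinity>" if "\<forall>i\<in>{1..N}. b i * c < 1" for c
    unfolding E_def using assms(2) that
    by (subst nn_integral_GRW_incr_power_sum) (auto simp: max_def)
  have "(\<integral>\<^sup>+ XY. ennreal (Vfun N c1 c2 (walk (fst XY)) (walk (snd XY))) \<partial>measure_pmf (GRW N b))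
     \<le> (\<integral>\<^sup>+ XY. ennreal (max 1 c2 ^ (\<Sum>i=1..N. fst XY i)) * ennreal (max 1 c1 ^ (\<Sum>i=1..N. snd XY i))
          \<partial>measure_pmf (GRW N b))"
    using Vfun_le_endpoint_powers[OF assms(1,3,4) mono_walk mono_walk walk_0 walk_0]
    by (intro nn_integral_mono) (simp add: nat_walk ennreal_mult'[symmetric] ennreal_leI mult.commute)
  also have "\<dots> = E (max 1 c2) * E (max 1 c1)"
    unfolding GRW_def E_def nn_integral_pair_pmf' by (simp add: nn_integral_cmult nn_integral_multc)
  also have "\<dots> < \<infinity>"
    using E_finite assms(6,7) by (simp add: ennreal_mult_less_top)
  finally show ?thesis .
qed

end
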